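(* Let $\mathfrak{X}$ be a connected complex analytic manifold with base point $z^*$ such that $H=H_1(\mathfrak{X};\mathbb{Z}_2)$ is finite, of order $2^s$, and let $k,q\ge0$. Then $\widehat{\mathcal{F}}^q_k$ coincides with the space of all $q$-forms $\theta\in\mathcal{A}^q(\widetilde{\mathfrak{X}})$ admitting a decomposition $\theta=\sum_{\rho\in H^*}\theta_\rho$ such that $\mathrm{Var}^\rho_\gamma\theta_\rho\in\widehat{\mathcal{F}}^q_{k-1}$ for all $\gamma\in\pi$ and all $\rho\in H^*$. Moreover, if $\theta\in\widehat{\mathcal{F}}^q_k$, one can take $$\theta_\rho=\frac{1}{2^s}\sum_{j=1}^{2^s}(-1)^{\rho(\gamma_j)}M_{\gamma_j}\theta,$$ where $\gamma_1=1,\gamma_2,\dots,\gamma_{2^s}\in\pi$ are representatives of all $2^s$ cosets $\pi/\hat\pi$.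
   Context: $\widetilde{\mathfrak{X}}$ is the universal covering, $\pi=\pi_1(\mathfrak{X},z^* )$ acting by deck transformations $T_\gamma$; $\mathcal{A}^q(\widetilde{\mathfrak{X}})$ is the space of holomorphic $q$-forms on $\widetilde{\mathfrak{X}}$; $M_\gamma\theta=T_\gamma^*\theta$, $\mathrm{Var}_\gamma\theta=M_\gamma\theta-\theta$. $H^*=H^1(\mathfrak{X};\mathbb{Z}_2)=\mathrm{Hom}(\pi,\mathbb{Z}_2)$. For $\rho\in H^*$ the twisted variation is $\mathrm{Var}^\rho_\gamma\theta=M_\gamma\theta-(-1)^{\rho(\gamma)}\theta$. $\hat\pi$ is the kernel of $\pi\to H$, and $\widehat{\mathcal{F}}^q_{-1}=\{0\}$, $\widehat{\mathcal{F}}^q_k=\{\theta:\mathrm{Var}_\gamma\theta\in\widehat{\mathcal{F}}^q_{k-1}\ \forall\gamma\in\hat\pi\}$. *)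

theory Defs
  imports "HOL-Analysis.Analysis" "HOL-Algebra.Algebra"
begin

(* Abstract algebraic rendering of the setting:
   G     : the fundamental group pi = pi_1(X, z* ) (HOL-Algebra group),
   'v    : the complex vector space A^q of holomorphic q-forms on the universal
           cover, with complex scalar multiplication sc,
   M g   : the pull-back M_gamma = T_gamma^* by the deck transformation. *)

definition pullback_rep ::
  "('g, 'm) monoid_scheme \<Rightarrow> (complex \<Rightarrow> 'v::ab_group_add \<Rightarrow> 'v) \<Rightarrow> ('g \<Rightarrow> 'v \<Rightarrow> 'v) \<Rightarrow> bool" where
  "pullback_rep G sc M \<longleftrightarrow>
     (\<forall>g\<in>carrier G. Vector_Spaces.linear sc sc (M g)) \<and>
     M \<one>\<^bsub>G\<^esub> = id \<and>
     (\<forall>g\<in>carrier G. \<forall>h\<in>carrier G. M (g \<otimes>\<^bsub>G\<^esub> h) = M h \<circ> M g)"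

(* \<hat>\<pi> = kernel of pi -> H = H_1(X;Z_2) = pi / ([pi,pi] pi^2) (Hurewicz mod 2):
   the subgroup generated by all squares and commutators. *)
definition hatpi :: "('g, 'm) monoid_scheme \<Rightarrow> 'g set" where
  "hatpi G = generate G
     ({x \<otimes>\<^bsub>G\<^esub> x | x. x \<in> carrier G} \<union>
      {x \<otimes>\<^bsub>G\<^esub> y \<otimes>\<^bsub>G\<^esub> inv\<^bsub>G\<^esub> x \<otimes>\<^bsub>G\<^esub> inv\<^bsub>G\<^esub> y | x y. x \<in> carrier G \<and> y \<in> carrier G})"

(* H^* = Hom(pi, Z_2); Z_2 = (bool, xor); extensional (False off the carrier) *)
definition dualH :: "('g, 'm) monoid_scheme \<Rightarrow> ('g \<Rightarrow> bool) set" where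
  "dualH G = {\<rho>. (\<forall>x\<in>carrier G. \<forall>y\<in>carrier G. \<rho> (x \<otimes>\<^bsub>G\<^esub> y) = (\<rho> x \<noteq> \<rho> y))
                 \<and> (\<forall>x. x \<notin> carrier G \<longrightarrow> \<not> \<rho> x)}"

definition sgnZ2 :: "bool \<Rightarrow> complex" where
  "sgnZ2 b = (if b then -1 else 1)"

definition Var :: "('g \<Rightarrow> 'v \<Rightarrow> 'v) \<Rightarrow> 'g \<Rightarrow> 'v::ab_group_add \<Rightarrow> 'v" where
  "Var M g \<theta> = M g \<theta> - \<theta>"

definition VarTw :: "(complex \<Rightarrow> 'v \<Rightarrow> 'v) \<Rightarrow> ('g \<Rightarrow> 'v \<Rightarrow> 'v) \<Rightarrow> ('g \<Rightarrow> bool) \<Rightarrow> 'g \<Rightarrow> 'v::ab_group_add \<Rightarrow> 'v" where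
  "VarTw sc M \<rho> g \<theta> = M g \<theta> - sc (sgnZ2 (\<rho> g)) \<theta>"

(* Ffilt G M n = \<hat>F^q_{n-1}; i.e. Ffilt G M 0 = \<hat>F_{-1} = {0},
   Ffilt G M (Suc k) = \<hat>F_k *)
fun Ffilt :: "('g, 'm) monoid_scheme \<Rightarrow> ('g \<Rightarrow> 'v \<Rightarrow> 'v) \<Rightarrow> nat \<Rightarrow> 'v::ab_group_add set" where
  "Ffilt G M 0 = {0}"
| "Ffilt G M (Suc k) = {\<theta>. \<forall>g\<in>hatpi G. Var M g \<theta> \<in> Ffilt G M k}"

end

theory Submission
  imports Defs
begin

text \<open>
  Since \<open>hatpi G\<close> contains all squares and commutators, \<open>\<pi> / hatpi G\<close> is an elementary
  abelian 2-group of order \<open>n = 2^s\<close>, and its characters (the elements of \<open>dualH G\<close>) separate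
  points: a subgroup that is maximal among those containing \<open>hatpi G\<close> but avoiding \<open>g\<close> has
  index two.  Right multiplication by \<open>g\<close> permutes the cosets of the transversal,
  \<open>\<gamma>_j g = h_j \<gamma>_\<sigma>(j)\<close> with \<open>h_j \<in> hatpi G\<close>.  This gives both orthogonality relations of
  the character table, hence \<open>card (dualH G) = n\<close> and \<open>\<Sum>\<rho>. \<theta>_\<rho> = \<theta>\<close>, and it gives
  \<open>M_g \<theta>_\<rho> - (-1)^\<rho>(g) \<theta>_\<rho> = 1/n \<Sum>j. (-1)^\<rho>(\<gamma>_j) M_\<gamma>_\<sigma>(j) (Var_h_j \<theta>)\<close>, which lies one
  step lower in the filtration since each filtration step is a subspace stable under all
  \<open>M_g\<close>.  Conversely, characters are trivial on \<open>hatpi G\<close>, so there the twisted variations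
  of the \<open>\<theta>_\<rho>\<close> are ordinary variations, and they add up to \<open>Var_h \<theta>\<close>.
\<close>

lemma sgnZ2_not: "sgnZ2 (\<not> a) = - sgnZ2 a"
  by (cases a) (simp_all add: sgnZ2_def)

lemma sum_eq_0_if_bij_negates:
  fixes f :: "'b \<Rightarrow> 'a::field_char_0"
  assumes \<tau>: "bij_betw \<tau> A A" and neg: "\<And>x. x \<in> A \<Longrightarrow> f (\<tau> x) = - f x"
  shows "sum f A = 0"
proof -
  have "sum f A = (\<Sum>x\<in>A. f (\<tau> x))" by (rule sum.reindex_bij_betw[OF \<tau>, symmetric])
  also have "\<dots> = - sum f A" by (simp add: neg sum_negf)
  finally show ?thesis by (simp add: eq_neg_iff_add_eq_0)
qed

section \<open>Characters of \<open>\<pi>/hatpi G\<close>\<close>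

lemma (in normal) union_rcos_subgroup:
  assumes x: "x \<in> carrier G" and sq: "x \<otimes> x \<in> H"
  shows "subgroup (H \<union> (H #> x)) G"
proof -
  have mult: "a \<otimes> b \<in> H #> (y \<otimes> z)"
    if "a \<in> H #> y" "b \<in> H #> z" "y \<in> carrier G" "z \<in> carrier G" for a b y z
    using rcos_sum[OF that(3,4)] that(1,2) unfolding set_mult_def by blast
  have inverse: "inv a \<in> H #> inv y" if "a \<in> H #> y" "y \<in> carrier G" for a y
    using rcos_inv[OF that(2)] that(1) unfolding SET_INV_def by blast
  have H1: "H #> \<one> = H" by (simp add: subset)
  have Hxx: "H #> (x \<otimes> x) = H" by (rule coset_join2[OF m_closed[OF x x] subgroup_axioms sq])
  have "inv x = inv (x \<otimes> x) \<otimes> x" using x by (simp add: inv_mult_group m_assoc)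
  then have "inv x \<in> H #> x"
    using rcosI[OF m_inv_closed[OF sq] subset x] by simp
  then have Hinv: "H #> inv x = H #> x"
    using repr_independence[OF _ x subgroup_axioms] by simp
  have cosets: "H \<union> (H #> x) = (\<Union>y\<in>{\<one>, x}. H #> y)"
    by (simp add: H1)
  have closed: "H #> (y \<otimes> z) \<subseteq> H \<union> (H #> x)" if "y \<in> {\<one>, x}" "z \<in> {\<one>, x}" for y z
    using that x by (auto simp: H1 Hxx)
  show ?thesis
  proof (rule subgroupI)
    show "H \<union> (H #> x) \<subseteq> carrier G" by (simp add: subset r_coset_subset_G[OF subset x])
    show "H \<union> (H #> x) \<noteq> {}" using subgroup.one_closed[OF subgroup_axioms] by blast
  next
    fix a assume "a \<in> H \<union> (H #> x)"
    then show "inv a \<in> H \<union> (H #> x)"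
    proof
      assume "a \<in> H #> x"
      then have "inv a \<in> H #> x" using inverse[OF _ x] Hinv by simp
      then show ?thesis ..
    qed (simp add: subgroup.m_inv_closed[OF subgroup_axioms])
  next
    fix a b assume "a \<in> H \<union> (H #> x)" "b \<in> H \<union> (H #> x)"
    then obtain y z where "y \<in> {\<one>, x}" "z \<in> {\<one>, x}" "a \<in> H #> y" "b \<in> H #> z"
      unfolding cosets by blast
    then show "a \<otimes> b \<in> H \<union> (H #> x)"
      using mult closed x by blast
  qed
qed

context group
begin

lemma hatpi_subgroup: "subgroup (hatpi G) G"
  unfolding hatpi_def by (rule generate_is_subgroup) (auto simp del: inv_mult_group)

lemma square_in_hatpi: "x \<in> carrier G \<Longrightarrow> x \<otimes> x \<in> hatpi G"
  unfolding hatpi_def by (intro generate.incl UnI1) blast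

lemma commutator_in_hatpi:
  "x \<in> carrier G \<Longrightarrow> y \<in> carrier G \<Longrightarrow> x \<otimes> y \<otimes> inv x \<otimes> inv y \<in> hatpi G"
  unfolding hatpi_def by (intro generate.incl UnI2) blast

lemma normal_if_hatpi_subset:
  assumes H: "subgroup H G" "hatpi G \<subseteq> H"
  shows "H \<lhd> G"
proof (rule normal_invI[OF H(1)])
  fix x h assume x: "x \<in> carrier G" and h: "h \<in> H"
  have hc: "h \<in> carrier G" using subgroup.mem_carrier[OF H(1) h] .
  have "x \<otimes> h \<otimes> inv x = (x \<otimes> h \<otimes> inv x \<otimes> inv h) \<otimes> h"
    using x hc by (simp add: m_assoc)
  moreover have "x \<otimes> h \<otimes> inv x \<otimes> inv h \<in> H"
    using commutator_in_hatpi[OF x hc] H(2) by blast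
  ultimately show "x \<otimes> h \<otimes> inv x \<in> H"
    using subgroup.m_closed[OF H(1) _ h] by metis
qed

lemma hatpi_normal: "hatpi G \<lhd> G"
  by (rule normal_if_hatpi_subset[OF hatpi_subgroup order_refl])

lemma dualH_mult:
  "\<rho> \<in> dualH G \<Longrightarrow> x \<in> carrier G \<Longrightarrow> y \<in> carrier G \<Longrightarrow> \<rho> (x \<otimes> y) = (\<rho> x \<noteq> \<rho> y)"
  unfolding dualH_def by simp

lemma dualH_outside_carrier: "\<rho> \<in> dualH G \<Longrightarrow> x \<notin> carrier G \<Longrightarrow> \<not> \<rho> x"
  unfolding dualH_def by simp

lemma dualH_one: "\<rho> \<in> dualH G \<Longrightarrow> \<not> \<rho> \<one>"
  using dualH_mult[of \<rho> \<one> \<one>] by simp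

lemma dualH_inv: "\<rho> \<in> dualH G \<Longrightarrow> x \<in> carrier G \<Longrightarrow> \<rho> (inv x) = \<rho> x"
  using dualH_mult[of \<rho> x "inv x"] dualH_one[of \<rho>] by auto

lemma dualH_kernel_subgroup:
  assumes "\<rho> \<in> dualH G"
  shows "subgroup {x \<in> carrier G. \<not> \<rho> x} G"
  by (rule subgroupI) (use dualH_one[OF assms] in \<open>auto simp: assms dualH_mult dualH_inv\<close>)

lemma dualH_vanishes_on_hatpi:
  assumes \<rho>: "\<rho> \<in> dualH G" and h: "h \<in> hatpi G"
  shows "\<not> \<rho> h"
proof -
  have "hatpi G \<subseteq> {x \<in> carrier G. \<not> \<rho> x}"
    unfolding hatpi_def
    by (rule generate_subgroup_incl[OF _ dualH_kernel_subgroup[OF \<rho>]])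
      (auto simp: \<rho> dualH_mult dualH_inv)
  then show ?thesis using h by blast
qed

lemma dualH_rcos_hatpi:
  assumes \<rho>: "\<rho> \<in> dualH G" and b: "b \<in> carrier G" and a: "a \<in> hatpi G #> b"
  shows "\<rho> a = \<rho> b"
proof -
  obtain h where h: "h \<in> hatpi G" "a = h \<otimes> b"
    using a unfolding r_coset_def by blast
  then show ?thesis
    using dualH_mult[OF \<rho> subgroup.mem_carrier[OF hatpi_subgroup h(1)] b]
      dualH_vanishes_on_hatpi[OF \<rho> h(1)] by simp
qed

lemma false_in_dualH: "(\<lambda>_. False) \<in> dualH G"
  by (simp add: dualH_def)

lemma dualH_xor:
  assumes "\<rho> \<in> dualH G" "\<rho>' \<in> dualH G"
  shows "(\<lambda>x. \<rho> x \<noteq> \<rho>' x) \<in> dualH G"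
  using assms by (auto simp: dualH_def)

lemma compl_indicator_in_dualH:
  assumes H: "subgroup H G"
    and index_two: "\<And>x y. x \<in> carrier G - H \<Longrightarrow> y \<in> carrier G - H \<Longrightarrow> x \<otimes> y \<in> H"
  shows "(\<lambda>x. x \<in> carrier G - H) \<in> dualH G"
proof -
  have parity: "(x \<otimes> y \<in> H) = (x \<in> H \<longleftrightarrow> y \<in> H)" if x: "x \<in> carrier G" and y: "y \<in> carrier G" for x y
  proof (cases "x \<in> H")
    case True
    then have "y = inv x \<otimes> (x \<otimes> y)" using x y by (simp add: m_assoc [symmetric])
    then have "x \<otimes> y \<in> H \<Longrightarrow> y \<in> H"
      using True subgroup.m_closed[OF H] subgroup.m_inv_closed[OF H] by metis
    then show ?thesis using True subgroup.m_closed[OF H] by blast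
  next
    case False
    have "x = (x \<otimes> y) \<otimes> inv y" using x y by (simp add: m_assoc)
    then have "x \<otimes> y \<in> H \<Longrightarrow> y \<notin> H"
      using False subgroup.m_closed[OF H] subgroup.m_inv_closed[OF H] by metis
    then show ?thesis using False index_two x y by blast
  qed
  show ?thesis
    unfolding dualH_def
  proof (intro CollectI conjI ballI allI impI)
    fix x y assume "x \<in> carrier G" "y \<in> carrier G"
    then show "(x \<otimes> y \<in> carrier G - H) = ((x \<in> carrier G - H) \<noteq> (y \<in> carrier G - H))"
      using parity by simp
  qed simp
qed

lemma finite_subgroups_containing:
  assumes N: "subgroup N G" and fin: "finite (rcosets N)"
  shows "finite {H. subgroup H G \<and> N \<subseteq> H}"
proof (rule finite_subset)
  show "{H. subgroup H G \<and> N \<subseteq> H} \<subseteq> Union ` Pow (rcosets N)"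
  proof
    fix H assume "H \<in> {H. subgroup H G \<and> N \<subseteq> H}"
    then have H: "subgroup H G" "N \<subseteq> H" by auto
    have "x \<in> \<Union>{C \<in> rcosets N. C \<subseteq> H}" if x: "x \<in> H" for x
    proof -
      have xc: "x \<in> carrier G" using subgroup.mem_carrier[OF H(1) x] .
      have "N #> x \<subseteq> H #> x" unfolding r_coset_def using H(2) by blast
      then have "N #> x \<subseteq> H" using coset_join2[OF xc H(1) x] by simp
      moreover have "N #> x \<in> rcosets N" using rcosetsI[OF subgroup.subset[OF N] xc] .
      moreover have "x \<in> N #> x" using rcos_self[OF xc N] .
      ultimately show ?thesis by blast
    qed
    then have "H = \<Union>{C \<in> rcosets N. C \<subseteq> H}" by blast
    then show "H \<in> Union ` Pow (rcosets N)" by blast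
  qed
qed (use fin in simp)

lemma dualH_separates:
  assumes fin: "finite (rcosets (hatpi G))" and g: "g \<in> carrier G" "g \<notin> hatpi G"
  shows "\<exists>\<rho>\<in>dualH G. \<rho> g"
proof -
  define Fam where "Fam = {H. subgroup H G \<and> hatpi G \<subseteq> H \<and> g \<notin> H}"
  have "finite Fam"
    using finite_subgroups_containing[OF hatpi_subgroup fin] by (rule rev_finite_subset) (auto simp: Fam_def)
  moreover have "hatpi G \<in> Fam" using hatpi_subgroup g by (simp add: Fam_def)
  ultimately obtain H where "H \<in> Fam" and maximal: "\<And>K. K \<in> Fam \<Longrightarrow> H \<subseteq> K \<Longrightarrow> H = K"
    using finite_has_maximal[of Fam] by blast
  then have H: "subgroup H G" "hatpi G \<subseteq> H" "g \<notin> H" by (auto simp: Fam_def)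
  interpret normal H G by (rule normal_if_hatpi_subset[OF H(1,2)])
  have g_rcos: "x \<in> H #> g" if x: "x \<in> carrier G" "x \<notin> H" for x
  proof -
    have "x \<in> H #> x" by (rule rcos_self[OF x(1) H(1)])
    then have "H \<noteq> H \<union> (H #> x)" using x(2) by blast
    moreover have "subgroup (H \<union> (H #> x)) G"
      using union_rcos_subgroup[OF x(1)] square_in_hatpi[OF x(1)] H(2) by blast
    ultimately have "H \<union> (H #> x) \<notin> Fam" using maximal by blast
    then have "g \<in> H \<union> (H #> x)" using \<open>subgroup (H \<union> (H #> x)) G\<close> H(2) by (simp add: Fam_def) blast
    then have "g \<in> H #> x" using H(3) by blast
    then have "H #> x = H #> g" by (rule repr_independence[OF _ x(1) H(1)])
    then show ?thesis using \<open>x \<in> H #> x\<close> by simp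
  qed
  have "x \<otimes> y \<in> H" if "x \<in> carrier G - H" "y \<in> carrier G - H" for x y
  proof -
    have "x \<in> H #> g" "y \<in> H #> g" using g_rcos that by auto
    then have "x \<otimes> y \<in> (H #> g) <#> (H #> g)" unfolding set_mult_def by blast
    also have "\<dots> = H #> (g \<otimes> g)" by (rule rcos_sum[OF g(1) g(1)])
    also have "\<dots> = H"
      using coset_join2[OF _ H(1), of "g \<otimes> g"] g(1) square_in_hatpi[OF g(1)] H(2) by auto
    finally show ?thesis .
  qed
  then have "(\<lambda>x. x \<in> carrier G - H) \<in> dualH G" by (rule compl_indicator_in_dualH[OF H(1)])
  then show ?thesis using g(1) H(3) by (intro bexI[of _ "\<lambda>x. x \<in> carrier G - H"]) auto
qed

end

section \<open>Transversals and orthogonality\<close>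

locale rcos_transversal = group G for G (structure) +
  fixes H :: "'a set" and n :: nat and gs :: "nat \<Rightarrow> 'a"
  assumes subgroup_H: "subgroup H G"
    and gs_carrier: "j < n \<Longrightarrow> gs j \<in> carrier G"
    and inj_on_rcos: "inj_on (\<lambda>j. H #> gs j) {..<n}"
    and image_rcos: "(\<lambda>j. H #> gs j) ` {..<n} = rcosets H"
begin

lemma rcos_transversal_cover:
  assumes x: "x \<in> carrier G"
  obtains j where "j < n" "x \<in> H #> gs j"
proof -
  have "H #> x \<in> (\<lambda>j. H #> gs j) ` {..<n}"
    using rcosetsI[OF subgroup.subset[OF subgroup_H] x] image_rcos by simp
  then obtain j where "j < n" "H #> x = H #> gs j" by auto
  then show ?thesis using that rcos_self[OF x subgroup_H] by simp
qed

lemma rcos_transversal_unique: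
  assumes "j < n" "j' < n" "gs j \<in> H #> gs j'"
  shows "j = j'"
proof -
  have "H #> gs j' = H #> gs j"
    by (rule repr_independence[OF assms(3) gs_carrier[OF assms(2)] subgroup_H])
  then show ?thesis using inj_onD[OF inj_on_rcos] assms(1,2) by simp
qed

lemma finite_rcosets: "finite (rcosets H)"
  using image_rcos[symmetric] by simp

lemma right_mult_permutes_transversal:
  assumes g: "g \<in> carrier G"
  obtains \<sigma> where "bij_betw \<sigma> {..<n} {..<n}" "\<And>j. j < n \<Longrightarrow> gs j \<otimes> g \<in> H #> gs (\<sigma> j)"
proof -
  define \<sigma> where "\<sigma> j = (SOME k. k < n \<and> gs j \<otimes> g \<in> H #> gs k)" for j
  have \<sigma>: "\<sigma> j < n \<and> gs j \<otimes> g \<in> H #> gs (\<sigma> j)" if j: "j < n" for j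
  proof -
    obtain k where "k < n" "gs j \<otimes> g \<in> H #> gs k"
      using rcos_transversal_cover[of "gs j \<otimes> g"] gs_carrier[OF j] g by blast
    then show ?thesis unfolding \<sigma>_def by (rule someI[of "\<lambda>k. k < n \<and> _ \<in> H #> gs k", OF conjI])
  qed
  have rcos_eq: "H #> gs j = (H #> gs (\<sigma> j)) #> inv g" if j: "j < n" for j
  proof -
    have "H #> gs (\<sigma> j) = H #> (gs j \<otimes> g)"
      using repr_independence[OF _ gs_carrier subgroup_H] \<sigma>[OF j] by blast
    then show ?thesis
      using j g gs_carrier
      by (simp add: coset_mult_assoc subgroup.subset[OF subgroup_H] m_assoc)
  qed
  have "inj_on \<sigma> {..<n}"
  proof (rule inj_onI)
    fix j j' assume "j \<in> {..<n}" "j' \<in> {..<n}" "\<sigma> j = \<sigma> j'"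
    then have "H #> gs j = H #> gs j'" using rcos_eq by simp
    then show "j = j'" using inj_onD[OF inj_on_rcos] \<open>j \<in> {..<n}\<close> \<open>j' \<in> {..<n}\<close> by blast
  qed
  moreover have "\<sigma> ` {..<n} \<subseteq> {..<n}" using \<sigma> by auto
  ultimately have "bij_betw \<sigma> {..<n} {..<n}"
    by (simp add: bij_betw_def endo_inj_surj)
  then show ?thesis using that \<sigma> by blast
qed

end

lemma (in group) exists_rcos_transversal:
  assumes H: "subgroup H G" and fin: "finite (rcosets H)"
  obtains gs where "gs 0 = \<one>" "rcos_transversal G H (card (rcosets H)) gs"
proof -
  let ?n = "card (rcosets H)"
  obtain f where f: "bij_betw f {..<?n} (rcosets H)"
    using ex_bij_betw_nat_finite[OF fin] atLeast0LessThan by metis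
  have "H \<in> rcosets H"
    using rcosetsI[OF subgroup.subset[OF H] one_closed] coset_mult_one[OF subgroup.subset[OF H]] by simp
  then have "H \<in> f ` {..<?n}" using f by (simp add: bij_betw_def)
  then obtain i where i: "i < ?n" "f i = H" by auto
  define f' where "f' = Fun.swap 0 i f"
  have f': "bij_betw f' {..<?n} (rcosets H)" "f' 0 = H"
    using f i by (simp_all add: f'_def bij_betw_swap_iff)
  have "\<exists>x. x \<in> carrier G \<and> f' j = H #> x" if "j < ?n" for j
  proof -
    have "f' j \<in> rcosets H" using f'(1) that by (auto simp: bij_betw_def)
    then show ?thesis unfolding RCOSETS_def by blast
  qed
  then obtain rep where rep: "\<And>j. j < ?n \<Longrightarrow> rep j \<in> carrier G \<and> f' j = H #> rep j"
    by metis
  define gs where "gs j = (if j = 0 then \<one> else rep j)" for j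
  have gs: "gs j \<in> carrier G \<and> H #> gs j = f' j" if "j < ?n" for j
  proof (cases "j = 0")
    case True
    then show ?thesis using f'(2) coset_mult_one[OF subgroup.subset[OF H]] by (simp add: gs_def)
  next
    case False
    then show ?thesis using rep[OF that] by (simp add: gs_def)
  qed
  have "inj_on (\<lambda>j. H #> gs j) {..<?n}"
    using inj_on_cong[of "{..<?n}" "\<lambda>j. H #> gs j" f'] gs f'(1) by (simp add: bij_betw_def)
  moreover have "(\<lambda>j. H #> gs j) ` {..<?n} = rcosets H"
    using image_cong[of "{..<?n}" "{..<?n}" "\<lambda>j. H #> gs j" f'] gs f'(1) by (simp add: bij_betw_def)
  ultimately have "rcos_transversal G H ?n gs"
    unfolding rcos_transversal_def rcos_transversal_axioms_def using group_axioms H gs by blast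
  then show ?thesis using that[of gs] by (simp add: gs_def)
qed

locale hatpi_transversal = rcos_transversal G "hatpi G" n gs
  for G :: "('a, 'b) monoid_scheme" (structure) and n gs +
  assumes gs_zero: "gs 0 = \<one>"
begin

lemma transversal_nonempty: "0 < n"
proof -
  have "hatpi G \<in> rcosets (hatpi G)"
    using rcosetsI[OF subgroup.subset[OF hatpi_subgroup] one_closed]
      coset_mult_one[OF subgroup.subset[OF hatpi_subgroup]] by simp
  then show ?thesis using image_rcos by (metis empty_iff image_empty lessThan_0 neq0_conv)
qed

lemma transversal_notin_hatpi:
  assumes "j < n" "j \<noteq> 0"
  shows "gs j \<notin> hatpi G"
proof
  assume "gs j \<in> hatpi G"
  then have "gs j \<in> hatpi G #> gs 0"
    using coset_mult_one[OF subgroup.subset[OF hatpi_subgroup]] by (simp add: gs_zero)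
  then show False using rcos_transversal_unique[OF assms(1) transversal_nonempty] assms(2) by blast
qed

lemma dualH_eq_if_eq_on_transversal:
  assumes \<rho>: "\<rho> \<in> dualH G" and \<rho>': "\<rho>' \<in> dualH G" and eq: "\<And>j. j < n \<Longrightarrow> \<rho> (gs j) = \<rho>' (gs j)"
  shows "\<rho> = \<rho>'"
proof
  fix x show "\<rho> x = \<rho>' x"
  proof (cases "x \<in> carrier G")
    case True
    then obtain j where "j < n" "x \<in> hatpi G #> gs j" by (rule rcos_transversal_cover)
    then show ?thesis
      using dualH_rcos_hatpi[OF \<rho>] dualH_rcos_hatpi[OF \<rho>'] gs_carrier eq by metis
  qed (simp add: dualH_outside_carrier \<rho> \<rho>')
qed

lemma finite_dualH: "finite (dualH G)"
proof (rule inj_on_finite)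
  show "inj_on (\<lambda>\<rho>. restrict (\<rho> \<circ> gs) {..<n}) (dualH G)"
    by (rule inj_onI) (metis dualH_eq_if_eq_on_transversal comp_apply lessThan_iff restrict_apply')
  show "(\<lambda>\<rho>. restrict (\<rho> \<circ> gs) {..<n}) ` dualH G \<subseteq> PiE {..<n} (\<lambda>_. UNIV)" by auto
qed (simp add: finite_PiE)

lemma sum_sgnZ2_transversal:
  assumes \<rho>: "\<rho> \<in> dualH G"
  shows "(\<Sum>j<n. sgnZ2 (\<rho> (gs j))) = (if \<rho> = (\<lambda>_. False) then of_nat n else 0)"
proof (cases "\<rho> = (\<lambda>_. False)")
  case False
  then obtain x where x: "x \<in> carrier G" "\<rho> x"
    using dualH_outside_carrier[OF \<rho>] by blast
  obtain \<sigma> where \<sigma>: "bij_betw \<sigma> {..<n} {..<n}" "\<And>j. j < n \<Longrightarrow> gs j \<otimes> x \<in> hatpi G #> gs (\<sigma> j)"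
    using right_mult_permutes_transversal[OF x(1)] by blast
  have "sgnZ2 (\<rho> (gs (\<sigma> j))) = - sgnZ2 (\<rho> (gs j))" if j: "j < n" for j
  proof -
    have "\<sigma> j < n" using \<sigma>(1) j by (auto simp: bij_betw_def)
    then have "\<rho> (gs (\<sigma> j)) = \<rho> (gs j \<otimes> x)"
      using dualH_rcos_hatpi[OF \<rho> gs_carrier \<sigma>(2)[OF j]] by simp
    then show ?thesis using dualH_mult[OF \<rho> gs_carrier[OF j] x(1)] x(2) by (simp add: sgnZ2_not)
  qed
  then have "(\<Sum>j<n. sgnZ2 (\<rho> (gs j))) = 0"
    by (intro sum_eq_0_if_bij_negates[OF \<sigma>(1)]) simp
  then show ?thesis using False by simp
qed (simp add: sgnZ2_def)

lemma sum_sgnZ2_dualH_eq_card: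
  assumes j: "j < n"
  shows "(\<Sum>\<rho>\<in>dualH G. sgnZ2 (\<rho> (gs j))) = (if j = 0 then of_nat (card (dualH G)) else 0)"
proof (cases "j = 0")
  case True
  then show ?thesis by (simp add: gs_zero dualH_one sgnZ2_def)
next
  case False
  obtain \<rho>\<^sub>0 where \<rho>\<^sub>0: "\<rho>\<^sub>0 \<in> dualH G" "\<rho>\<^sub>0 (gs j)"
    using dualH_separates[OF finite_rcosets gs_carrier[OF j] transversal_notin_hatpi[OF j False]] by blast
  define \<tau> where "\<tau> \<rho> = (\<lambda>x. \<rho> x \<noteq> \<rho>\<^sub>0 x)" for \<rho> :: "'a \<Rightarrow> bool"
  have \<tau>_dualH: "\<tau> \<rho> \<in> dualH G" if "\<rho> \<in> dualH G" for \<rho>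
    unfolding \<tau>_def by (rule dualH_xor[OF that \<rho>\<^sub>0(1)])
  have \<tau>_involution: "\<tau> (\<tau> \<rho>) = \<rho>" for \<rho> by (auto simp: \<tau>_def fun_eq_iff)
  have "bij_betw \<tau> (dualH G) (dualH G)"
    by (rule bij_betw_byWitness[where f' = \<tau>]) (auto simp: \<tau>_dualH \<tau>_involution)
  then have "(\<Sum>\<rho>\<in>dualH G. sgnZ2 (\<rho> (gs j))) = 0"
    by (rule sum_eq_0_if_bij_negates) (simp add: \<tau>_def \<rho>\<^sub>0(2) sgnZ2_not)
  then show ?thesis using False by simp
qed

lemma card_dualH: "card (dualH G) = n"
proof -
  have "(\<Sum>\<rho>\<in>dualH G. \<Sum>j<n. sgnZ2 (\<rho> (gs j)))
      = (\<Sum>\<rho>\<in>dualH G. if \<rho> = (\<lambda>_. False) then of_nat n else 0)"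
    by (rule sum.cong) (simp_all add: sum_sgnZ2_transversal)
  also have "\<dots> = of_nat n" using finite_dualH false_in_dualH by simp
  finally have rows: "(\<Sum>\<rho>\<in>dualH G. \<Sum>j<n. sgnZ2 (\<rho> (gs j))) = of_nat n" .
  have "(\<Sum>j<n. \<Sum>\<rho>\<in>dualH G. sgnZ2 (\<rho> (gs j)))
      = (\<Sum>j<n. if j = 0 then of_nat (card (dualH G)) else 0)"
    by (rule sum.cong) (simp_all add: sum_sgnZ2_dualH_eq_card)
  also have "\<dots> = of_nat (card (dualH G))" using transversal_nonempty by simp
  finally have columns: "(\<Sum>j<n. \<Sum>\<rho>\<in>dualH G. sgnZ2 (\<rho> (gs j))) = of_nat (card (dualH G))" .
  have "(\<Sum>\<rho>\<in>dualH G. \<Sum>j<n. sgnZ2 (\<rho> (gs j))) = (\<Sum>j<n. \<Sum>\<rho>\<in>dualH G. sgnZ2 (\<rho> (gs j)))"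
    by (rule sum.swap)
  then have "(of_nat (card (dualH G)) :: complex) = of_nat n" using rows columns by simp
  then show ?thesis by (simp only: of_nat_eq_iff)
qed

lemma sum_sgnZ2_dualH:
  "j < n \<Longrightarrow> (\<Sum>\<rho>\<in>dualH G. sgnZ2 (\<rho> (gs j))) = (if j = 0 then of_nat n else 0)"
  using sum_sgnZ2_dualH_eq_card card_dualH by simp

end

section \<open>The filtration\<close>

locale pullback_action = group G + vector_space sc
  for G :: "('a, 'b) monoid_scheme" (structure) and sc :: "complex \<Rightarrow> 'v::ab_group_add \<Rightarrow> 'v" +
  fixes M :: "'a \<Rightarrow> 'v \<Rightarrow> 'v"
  assumes pullback: "pullback_rep G sc M"
begin

lemma module_hom_M: "g \<in> carrier G \<Longrightarrow> module_hom sc sc (M g)"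
  using pullback by (simp add: pullback_rep_def module_hom_iff_linear)

lemma M_one: "M \<one> = id"
  using pullback by (simp add: pullback_rep_def)

lemma M_mult: "g \<in> carrier G \<Longrightarrow> h \<in> carrier G \<Longrightarrow> M (g \<otimes> h) = M h \<circ> M g"
  using pullback by (simp add: pullback_rep_def)

lemma subspace_Ffilt: "subspace (Ffilt G M m)"
proof (induction m)
  case 0
  show ?case by (simp add: subspace_def)
next
  case (Suc m)
  have Var_zero: "Var M h 0 = 0"
    and Var_add: "Var M h (x + y) = Var M h x + Var M h y"
    and Var_scale: "Var M h (sc c x) = sc c (Var M h x)" if "h \<in> hatpi G" for h x y c
    using module_hom_M[OF subgroup.mem_carrier[OF hatpi_subgroup that]]
    by (simp_all add: Var_def module_hom.zero module_hom.add module_hom.scale scale_right_diff_distrib)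
  show ?case
    unfolding subspace_def
    using subspace_0[OF Suc.IH] subspace_add[OF Suc.IH] subspace_scale[OF Suc.IH]
    by (simp add: Var_zero Var_add Var_scale)
qed

lemma Ffilt_M_invariant:
  assumes g: "g \<in> carrier G" and \<theta>: "\<theta> \<in> Ffilt G M m"
  shows "M g \<theta> \<in> Ffilt G M m"
  using \<theta>
proof (induction m arbitrary: \<theta>)
  case 0
  then show ?case using module_hom.zero[OF module_hom_M[OF g]] by simp
next
  case (Suc m)
  have "Var M h (M g \<theta>) \<in> Ffilt G M m" if h: "h \<in> hatpi G" for h
  proof -
    have hc: "h \<in> carrier G" by (rule subgroup.mem_carrier[OF hatpi_subgroup h])
    define h' where "h' = g \<otimes> h \<otimes> inv g"
    have h': "h' \<in> hatpi G"
      unfolding h'_def by (rule normal.inv_op_closed2[OF hatpi_normal g h])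
    have "g \<otimes> h = h' \<otimes> g" using g hc by (simp add: h'_def m_assoc)
    then have "M h (M g \<theta>) = M g (M h' \<theta>)"
      using M_mult g hc subgroup.mem_carrier[OF hatpi_subgroup h'] by (metis comp_apply)
    then have "Var M h (M g \<theta>) = M g (Var M h' \<theta>)"
      by (simp add: Var_def module_hom.diff[OF module_hom_M[OF g]])
    moreover have "Var M h' \<theta> \<in> Ffilt G M m" using Suc.prems h' by simp
    ultimately show ?thesis using Suc.IH by simp
  qed
  then show ?case by simp
qed

lemma M_rcos_diff_in_Ffilt:
  assumes \<theta>: "\<theta> \<in> Ffilt G M (Suc k)" and b: "b \<in> carrier G" and a: "a \<in> hatpi G #> b"
  shows "M a \<theta> - M b \<theta> \<in> Ffilt G M k"
proof -
  obtain h where h: "h \<in> hatpi G" "a = h \<otimes> b"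
    using a unfolding r_coset_def by blast
  have "M a \<theta> - M b \<theta> = M b (Var M h \<theta>)"
    using h M_mult[OF subgroup.mem_carrier[OF hatpi_subgroup h(1)] b]
    by (simp add: Var_def module_hom.diff[OF module_hom_M[OF b]])
  also have "\<dots> \<in> Ffilt G M k" using \<theta> h(1) by (intro Ffilt_M_invariant[OF b]) simp
  finally show ?thesis .
qed

lemma VarTw_hatpi:
  "\<rho> \<in> dualH G \<Longrightarrow> h \<in> hatpi G \<Longrightarrow> VarTw sc M \<rho> h \<theta> = Var M h \<theta>"
  by (simp add: VarTw_def Var_def sgnZ2_def dualH_vanishes_on_hatpi)

lemma Ffilt_if_twisted_decomposition:
  assumes decomp: "\<theta> = (\<Sum>\<rho>\<in>dualH G. \<Theta> \<rho>)"
    and twisted: "\<And>\<rho> g. \<rho> \<in> dualH G \<Longrightarrow> g \<in> carrier G \<Longrightarrow> VarTw sc M \<rho> g (\<Theta> \<rho>) \<in> Ffilt G M k"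
  shows "\<theta> \<in> Ffilt G M (Suc k)"
proof -
  have "Var M h \<theta> \<in> Ffilt G M k" if h: "h \<in> hatpi G" for h
  proof -
    have hc: "h \<in> carrier G" by (rule subgroup.mem_carrier[OF hatpi_subgroup h])
    have "Var M h \<theta> = (\<Sum>\<rho>\<in>dualH G. Var M h (\<Theta> \<rho>))"
      by (simp add: decomp Var_def module_hom.sum[OF module_hom_M[OF hc]] sum_subtractf)
    also have "\<dots> = (\<Sum>\<rho>\<in>dualH G. VarTw sc M \<rho> h (\<Theta> \<rho>))"
      using h by (simp add: VarTw_hatpi)
    also have "\<dots> \<in> Ffilt G M k"
      by (rule subspace_sum[OF subspace_Ffilt twisted[OF _ hc]])
    finally show ?thesis .
  qed
  then show ?thesis by simp
qed

end

lemma (in group) hatpi_transversal_iff: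
  "hatpi_transversal G n gs \<longleftrightarrow>
     gs 0 = \<one> \<and> (\<forall>j<n. gs j \<in> carrier G) \<and>
     inj_on (\<lambda>j. hatpi G #> gs j) {..<n} \<and> (\<lambda>j. hatpi G #> gs j) ` {..<n} = rcosets (hatpi G)"
  using group_axioms hatpi_subgroup
  by (auto simp: hatpi_transversal_def hatpi_transversal_axioms_def
      rcos_transversal_def rcos_transversal_axioms_def)

locale pullback_transversal = pullback_action G sc M + hatpi_transversal G n gs
  for G :: "('a, 'b) monoid_scheme" (structure) and sc :: "complex \<Rightarrow> 'v::ab_group_add \<Rightarrow> 'v"
    and M n gs
begin

definition component :: "('a \<Rightarrow> bool) \<Rightarrow> 'v \<Rightarrow> 'v" where
  "component \<rho> \<theta> = sc (1 / of_nat n) (\<Sum>j<n. sc (sgnZ2 (\<rho> (gs j))) (M (gs j) \<theta>))"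

lemma sum_component: "(\<Sum>\<rho>\<in>dualH G. component \<rho> \<theta>) = \<theta>"
proof -
  have "(\<Sum>\<rho>\<in>dualH G. \<Sum>j<n. sc (sgnZ2 (\<rho> (gs j))) (M (gs j) \<theta>))
      = (\<Sum>j<n. sc (\<Sum>\<rho>\<in>dualH G. sgnZ2 (\<rho> (gs j))) (M (gs j) \<theta>))"
    by (subst sum.swap) (simp add: scale_sum_left)
  also have "\<dots> = (\<Sum>j<n. if j = 0 then sc (of_nat n) \<theta> else 0)"
    by (rule sum.cong) (simp_all add: sum_sgnZ2_dualH gs_zero M_one)
  also have "\<dots> = sc (of_nat n) \<theta>" using transversal_nonempty by simp
  finally show ?thesis
    using transversal_nonempty by (simp add: component_def scale_sum_right[symmetric])
qed

lemma VarTw_component_in_Ffilt: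
  assumes \<theta>: "\<theta> \<in> Ffilt G M (Suc k)" and \<rho>: "\<rho> \<in> dualH G" and g: "g \<in> carrier G"
  shows "VarTw sc M \<rho> g (component \<rho> \<theta>) \<in> Ffilt G M k"
proof -
  obtain \<sigma> where \<sigma>: "bij_betw \<sigma> {..<n} {..<n}" "\<And>j. j < n \<Longrightarrow> gs j \<otimes> g \<in> hatpi G #> gs (\<sigma> j)"
    using right_mult_permutes_transversal[OF g] by blast
  have \<sigma>_lt: "\<sigma> j < n" if "j < n" for j using \<sigma>(1) that by (auto simp: bij_betw_def)
  define c where "c j = sgnZ2 (\<rho> (gs j))" for j
  define S where "S = (\<Sum>j<n. sc (c j) (M (gs j) \<theta>))"
  have c_\<sigma>: "sgnZ2 (\<rho> g) * c (\<sigma> j) = c j" if j: "j < n" for j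
  proof -
    have "\<rho> (gs (\<sigma> j)) = (\<rho> (gs j) \<noteq> \<rho> g)"
      using dualH_rcos_hatpi[OF \<rho> gs_carrier[OF \<sigma>_lt[OF j]] \<sigma>(2)[OF j]]
        dualH_mult[OF \<rho> gs_carrier[OF j] g] by simp
    then show ?thesis by (auto simp: c_def sgnZ2_def)
  qed
  have "M g S = (\<Sum>j<n. sc (c j) (M (gs j \<otimes> g) \<theta>))"
    using gs_carrier
    by (simp add: S_def module_hom.sum[OF module_hom_M[OF g]] module_hom.scale[OF module_hom_M[OF g]] M_mult g)
  moreover have "sc (sgnZ2 (\<rho> g)) S = (\<Sum>j<n. sc (c j) (M (gs (\<sigma> j)) \<theta>))"
  proof -
    have "sc (sgnZ2 (\<rho> g)) S = (\<Sum>j<n. sc (sgnZ2 (\<rho> g) * c (\<sigma> j)) (M (gs (\<sigma> j)) \<theta>))"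
      using sum.reindex_bij_betw[OF \<sigma>(1), of "\<lambda>j. sc (sgnZ2 (\<rho> g) * c j) (M (gs j) \<theta>)"]
      by (simp add: S_def scale_sum_right)
    also have "\<dots> = (\<Sum>j<n. sc (c j) (M (gs (\<sigma> j)) \<theta>))"
      by (rule sum.cong) (simp_all add: c_\<sigma>)
    finally show ?thesis .
  qed
  ultimately have "VarTw sc M \<rho> g S = (\<Sum>j<n. sc (c j) (M (gs j \<otimes> g) \<theta> - M (gs (\<sigma> j)) \<theta>))"
    by (simp add: VarTw_def scale_right_diff_distrib sum_subtractf)
  also have "\<dots> \<in> Ffilt G M k"
    using \<theta> gs_carrier \<sigma>(2) \<sigma>_lt
    by (intro subspace_sum[OF subspace_Ffilt] subspace_scale[OF subspace_Ffilt] M_rcos_diff_in_Ffilt) auto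
  finally have "VarTw sc M \<rho> g S \<in> Ffilt G M k" .
  moreover have "VarTw sc M \<rho> g (component \<rho> \<theta>) = sc (1 / of_nat n) (VarTw sc M \<rho> g S)"
    by (simp add: component_def S_def c_def VarTw_def module_hom.scale[OF module_hom_M[OF g]]
        scale_right_diff_distrib mult.commute)
  ultimately show ?thesis using subspace_scale[OF subspace_Ffilt] by simp
qed

end

theorem lemma3:
  fixes G :: "('g, 'm) monoid_scheme"
    and sc :: "complex \<Rightarrow> 'v::ab_group_add \<Rightarrow> 'v"
    and M :: "'g \<Rightarrow> 'v \<Rightarrow> 'v"
    and s k :: nat
  assumes "group G"
    and "vector_space sc"
    and "pullback_rep G sc M"
    and "finite (rcosets\<^bsub>G\<^esub> (hatpi G))"
    and "card (rcosets\<^bsub>G\<^esub> (hatpi G)) = 2 ^ s"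
  shows "Ffilt G M (Suc k) =
           {\<theta>. \<exists>\<Theta> :: ('g \<Rightarrow> bool) \<Rightarrow> 'v.
                  \<theta> = (\<Sum>\<rho>\<in>dualH G. \<Theta> \<rho>) \<and>
                  (\<forall>\<rho>\<in>dualH G. \<forall>g\<in>carrier G. VarTw sc M \<rho> g (\<Theta> \<rho>) \<in> Ffilt G M k)}
         \<and> (\<forall>\<theta>\<in>Ffilt G M (Suc k). \<forall>gs :: nat \<Rightarrow> 'g.
              gs 0 = \<one>\<^bsub>G\<^esub> \<and> (\<forall>j<2 ^ s. gs j \<in> carrier G) \<and>
              inj_on (\<lambda>j. hatpi G #>\<^bsub>G\<^esub> gs j) {..<2 ^ s} \<and>
              (\<lambda>j. hatpi G #>\<^bsub>G\<^esub> gs j) ` {..<2 ^ s} = rcosets\<^bsub>G\<^esub> (hatpi G)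
              \<longrightarrow>
              (let \<Theta> = (\<lambda>\<rho>. sc (1 / 2 ^ s)
                          (\<Sum>j<2 ^ s. sc (sgnZ2 (\<rho> (gs j))) (M (gs j) \<theta>)))
               in \<theta> = (\<Sum>\<rho>\<in>dualH G. \<Theta> \<rho>) \<and>
                  (\<forall>\<rho>\<in>dualH G. \<forall>g\<in>carrier G. VarTw sc M \<rho> g (\<Theta> \<rho>) \<in> Ffilt G M k)))"
  (is "?filtration \<and> ?components")
proof -
  interpret pullback_action G sc M
    using assms(1-3) by (simp add: pullback_action_def pullback_action_axioms_def)
  have components: "\<theta> = (\<Sum>\<rho>\<in>dualH G. \<Theta> \<rho>) \<and>
      (\<forall>\<rho>\<in>dualH G. \<forall>g\<in>carrier G. VarTw sc M \<rho> g (\<Theta> \<rho>) \<in> Ffilt G M k)"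
    if "\<theta> \<in> Ffilt G M (Suc k)" "hatpi_transversal G (2 ^ s) gs"
      and "\<Theta> = (\<lambda>\<rho>. sc (1 / 2 ^ s) (\<Sum>j<2 ^ s. sc (sgnZ2 (\<rho> (gs j))) (M (gs j) \<theta>)))" for \<theta> gs \<Theta>
  proof -
    interpret pullback_transversal G sc M "2 ^ s" gs
      using that(2) by (simp add: pullback_transversal_def pullback_action_axioms)
    have "\<Theta> = (\<lambda>\<rho>. component \<rho> \<theta>)" by (simp add: that(3) component_def fun_eq_iff)
    then show ?thesis using sum_component VarTw_component_in_Ffilt[OF that(1)] by simp
  qed
  obtain gs where "gs 0 = \<one>\<^bsub>G\<^esub>" "rcos_transversal G (hatpi G) (2 ^ s) gs"
    using exists_rcos_transversal[OF hatpi_subgroup assms(4)] assms(5) by metis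
  then have "hatpi_transversal G (2 ^ s) gs"
    by (simp add: hatpi_transversal_def hatpi_transversal_axioms_def)
  then have ?filtration
    using components Ffilt_if_twisted_decomposition by blast
  moreover have ?components
    using components by (simp add: hatpi_transversal_iff Let_def)
  ultimately show ?thesis ..
qed

end
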